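(* Let $$\tau_1(x)=\begin{cases}\tfrac43x,&0\le x<\tfrac38,\\ 4x-1,&\tfrac38\le x<\tfrac12,\\ -4x+3,&\tfrac12\le x<\tfrac58,\\ -\tfrac43x+\tfrac43,&\tfrac58\le x\le1,\end{cases}\qquad \tau_2(x)=\begin{cases}3x,&0\le x<\tfrac16,\\ \tfrac32x+\tfrac14,&\tfrac16\le x<\tfrac12,\\ -\tfrac32x+\tfrac74,&\tfrac12\le x<\tfrac56,\\ -3x+3,&\tfrac56\le x\le1.\end{cases}$$ Then $\tau_1$ preserves the density $f_1=\frac32\chi_{[0,1/2]}+\frac12\chi_{[1/2,1]}$, $\tau_2$ preserves $f_2=\frac23\chi_{[0,1/2]}+\frac43\chi_{[1/2,1]}$, and $1=\frac25f_1+\frac35f_2$. Nevertheless, there is no Borel measurable map $\eta:[0,1]\to[0,1]$ with $\eta(x)\in\{\tau_1(x),\tau_2(x)\}$ for every $x$ that preserves Lebesgue measure. On the other hand, the map $$\tau(x)=\begin{cases}\tau_2(x),&0\le x<\tfrac12,\\ -3x+\tfrac52,&\tfrac12\le x<\tfrac23,\\ -\tfrac32x+\tfrac32,&\tfrac23\le x\le1\end{cases}$$ satisfies $\tau_1\le\tau\le\tau_2$ and preserves Lebesgue measure.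
   Context: A probability density $f$ is preserved by $\tau$ if $\int_{\tau^{-1}(A)}f\,dx=\int_A f\,dx$ for every Borel $A\subseteq[0,1]$; preserving Lebesgue measure means preserving the density $1$. *)

theory Defs
  imports "HOL-Analysis.Analysis"
begin

definition preserves_density :: "(real \<Rightarrow> real) \<Rightarrow> (real \<Rightarrow> real) \<Rightarrow> bool" where
  "preserves_density t f \<longleftrightarrow>
     (\<forall>A \<in> sets borel. A \<subseteq> {0..1} \<longrightarrow>
        (\<integral>\<^sup>+ x \<in> (t -` A \<inter> {0..1}). ennreal (f x) \<partial>lborel)
        = (\<integral>\<^sup>+ x \<in> A. ennreal (f x) \<partial>lborel))"

definition tau1 :: "real \<Rightarrow> real" where
  "tau1 x = (if x < 3/8 then 4/3 * x
             else if x < 1/2 then 4 * x - 1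
             else if x < 5/8 then -4 * x + 3
             else -4/3 * x + 4/3)"

definition tau2 :: "real \<Rightarrow> real" where
  "tau2 x = (if x < 1/6 then 3 * x
             else if x < 1/2 then 3/2 * x + 1/4
             else if x < 5/6 then -3/2 * x + 7/4
             else -3 * x + 3)"

definition tau :: "real \<Rightarrow> real" where
  "tau x = (if x < 1/2 then tau2 x
            else if x < 2/3 then -3 * x + 5/2
            else -3/2 * x + 3/2)"

definition f1 :: "real \<Rightarrow> real" where
  "f1 x = 3/2 * indicator {0..1/2} x + 1/2 * indicator {1/2..1} x"

definition f2 :: "real \<Rightarrow> real" where
  "f2 x = 2/3 * indicator {0..1/2} x + 4/3 * indicator {1/2..1} x"

end

theory Submission
  imports Defs
begin

text \<open>Each of the three maps is piecewise affine, so the push-forward of a density w under it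
  has the Frobenius--Perron density: the sum of w over the branch preimages of a point, each
  divided by the absolute slope of its branch. The three invariance statements thereby become
  identities between step functions.

  For a measurable selection \<eta> of tau1 and tau2 let T be the set where \<eta> follows tau2. Only
  the two middle branches of each map land in ]1/2, 1[, with slopes \<plusminus>3/2 and \<plusminus>4, so there the
  push-forward of Lebesgue measure has density 2/3 (s1 + s2) + 1/4 (2 - s3 - s4), where the si
  are values of the indicator of T. This is never 1, so \<eta> cannot preserve Lebesgue measure.\<close>

text \<open>A branch (a, b, m, q) stands for the affine map x \<mapsto> m x + q on ]a, b[.\<close>

definition frobenius_perron ::
    "(real \<times> real \<times> real \<times> real) set \<Rightarrow> (real \<Rightarrow> real) \<Rightarrow> real \<Rightarrow> real" where
  "frobenius_perron B w y =
     (\<Sum>(a, b, m, q)\<in>B. w ((y - q) / m) * indicator {a<..<b} ((y - q) / m) / \<bar>m\<bar>)"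

text \<open>The branch intervals cover S exactly once up to a null set, so the values of t at the
  break points are irrelevant.\<close>

definition piecewise_affine_on ::
    "(real \<times> real \<times> real \<times> real) set \<Rightarrow> real set \<Rightarrow> (real \<Rightarrow> real) \<Rightarrow> bool" where
  "piecewise_affine_on B S t \<longleftrightarrow> finite B
     \<and> (\<forall>(a, b, m, q)\<in>B. m \<noteq> 0 \<and> (\<forall>x\<in>{a<..<b}. t x = m * x + q))
     \<and> (AE x in lborel. (\<Sum>(a, b, m, q)\<in>B. indicator {a<..<b} x) = (indicator S x :: real))"

lemma borel_measurable_frobenius_perron [measurable]:
  "w \<in> borel_measurable borel \<Longrightarrow> frobenius_perron B w \<in> borel_measurable borel"
  unfolding frobenius_perron_def by (intro borel_measurable_sum) (auto split: prod.splits)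

lemma frobenius_perron_nonneg: "(\<And>x. 0 \<le> w x) \<Longrightarrow> 0 \<le> frobenius_perron B w y"
  unfolding frobenius_perron_def by (intro sum_nonneg) (auto split: prod.splits)

lemma nn_integral_affine_branch:
  fixes w :: "real \<Rightarrow> real" and m q :: real
  assumes [measurable]: "w \<in> borel_measurable borel" "A \<in> sets borel"
    and w_nonneg: "\<And>x. 0 \<le> w x" and "m \<noteq> 0"
  shows "(\<integral>\<^sup>+x. ennreal (w x * indicator {a<..<b} x) * indicator A (m * x + q) \<partial>lborel)
       = (\<integral>\<^sup>+y\<in>A. ennreal (w ((y - q) / m) * indicator {a<..<b} ((y - q) / m) / \<bar>m\<bar>) \<partial>lborel)"
proof -
  let ?v = "\<lambda>y. w ((y - q) / m) * indicator {a<..<b} ((y - q) / m)"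
  have "(\<integral>\<^sup>+x. ennreal (w x * indicator {a<..<b} x) * indicator A (m * x + q) \<partial>lborel)
      = \<bar>1 / m\<bar> * (\<integral>\<^sup>+y. ennreal (?v y) * indicator A y \<partial>lborel)"
    using \<open>m \<noteq> 0\<close> by (subst nn_integral_real_affine[where c = "1 / m" and t = "- q / m"])
      (simp_all add: field_simps)
  also have "\<dots> = (\<integral>\<^sup>+y. ennreal (1 / \<bar>m\<bar>) * ennreal (?v y) * indicator A y \<partial>lborel)"
    by (subst nn_integral_cmult[symmetric]) (simp_all add: mult.assoc)
  also have "\<dots> = (\<integral>\<^sup>+y. ennreal (?v y / \<bar>m\<bar>) * indicator A y \<partial>lborel)"
    using w_nonneg by (simp add: ennreal_mult[symmetric])
  finally show ?thesis .
qed

lemma nn_integral_preimage_piecewise_affine: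
  fixes w :: "real \<Rightarrow> real"
  assumes t: "piecewise_affine_on B S t"
    and [measurable]: "w \<in> borel_measurable borel" "A \<in> sets borel" and w_nonneg: "\<And>x. 0 \<le> w x"
  shows "(\<integral>\<^sup>+x\<in>t -` A \<inter> S. ennreal (w x) \<partial>lborel)
       = (\<integral>\<^sup>+y\<in>A. ennreal (frobenius_perron B w y) \<partial>lborel)"
proof -
  let ?branch = "\<lambda>(a, b, m, q) x. ennreal (w x * indicator {a<..<b} x) * indicator A (m * x + q)"
  let ?pull = "\<lambda>(a, b, m, q) y. w ((y - q) / m) * indicator {a<..<b} ((y - q) / m) / \<bar>m\<bar>"
  have slope: "\<And>a b m q. (a, b, m, q) \<in> B \<Longrightarrow> m \<noteq> 0"
    and affine: "\<And>a b m q x. (a, b, m, q) \<in> B \<Longrightarrow> a < x \<Longrightarrow> x < b \<Longrightarrow> t x = m * x + q"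
    and partition: "AE x in lborel. (\<Sum>(a, b, m, q)\<in>B. indicator {a<..<b} x) = (indicator S x :: real)"
    using t by (fastforce simp: piecewise_affine_on_def)+
  have "AE x in lborel. ennreal (w x) * indicator (t -` A \<inter> S) x = (\<Sum>i\<in>B. ?branch i x)"
    using partition
  proof eventually_elim
    case (elim x)
    have "ennreal (w x) * indicator (t -` A \<inter> S) x = ennreal (w x * indicator S x * indicator A (t x))"
      by (auto simp: indicator_def)
    also have "\<dots> = ennreal (\<Sum>(a, b, m, q)\<in>B. w x * indicator {a<..<b} x * indicator A (m * x + q))"
      unfolding elim(1)[symmetric] sum_distrib_left sum_distrib_right
      by (intro arg_cong[where f = ennreal] sum.cong) (auto simp: indicator_def affine)
    also have "\<dots> = (\<Sum>i\<in>B. ?branch i x)"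
      using w_nonneg by (subst sum_ennreal[symmetric]) (auto simp: indicator_def intro!: sum.cong)
    finally show ?case .
  qed
  then have "(\<integral>\<^sup>+x\<in>t -` A \<inter> S. ennreal (w x) \<partial>lborel) = (\<Sum>i\<in>B. \<integral>\<^sup>+x. ?branch i x \<partial>lborel)"
    by (subst nn_integral_sum[symmetric]) (auto intro: nn_integral_cong_AE split: prod.splits)
  also have "\<dots> = (\<Sum>i\<in>B. \<integral>\<^sup>+y\<in>A. ennreal (?pull i y) \<partial>lborel)"
    by (intro sum.cong) (auto intro!: nn_integral_affine_branch w_nonneg slope)
  also have "\<dots> = (\<integral>\<^sup>+y. (\<Sum>i\<in>B. ennreal (?pull i y)) * indicator A y \<partial>lborel)"
    by (subst nn_integral_sum[symmetric]) (auto simp: sum_distrib_right split: prod.splits)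
  also have "\<dots> = (\<integral>\<^sup>+y\<in>A. ennreal (frobenius_perron B w y) \<partial>lborel)"
    unfolding frobenius_perron_def using w_nonneg
    by (subst sum_ennreal) (auto simp: split_def)
  finally show ?thesis .
qed

lemma preserves_density_piecewise_affine:
  assumes t: "piecewise_affine_on B {0..1} t"
    and [measurable]: "f \<in> borel_measurable borel" and f_nonneg: "\<And>x. 0 \<le> f x"
    and invariant: "AE y in lborel. y \<in> {0..1} \<longrightarrow> frobenius_perron B f y = f y"
  shows "preserves_density t f"
  unfolding preserves_density_def
proof (intro ballI impI)
  fix A :: "real set" assume [measurable]: "A \<in> sets borel" and "A \<subseteq> {0..1}"
  have "(\<integral>\<^sup>+y\<in>A. ennreal (frobenius_perron B f y) \<partial>lborel) = (\<integral>\<^sup>+y\<in>A. ennreal (f y) \<partial>lborel)"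
    using invariant \<open>A \<subseteq> {0..1}\<close>
    by (intro nn_integral_cong_AE) (auto elim!: eventually_mono simp: indicator_def)
  then show "(\<integral>\<^sup>+x\<in>t -` A \<inter> {0..1}. ennreal (f x) \<partial>lborel) = (\<integral>\<^sup>+y\<in>A. ennreal (f y) \<partial>lborel)"
    by (simp add: nn_integral_preimage_piecewise_affine[OF t] f_nonneg)
qed

lemma AE_lborel_not_in_finite:
  fixes F :: "'a::euclidean_space set"
  shows "finite F \<Longrightarrow> AE x in lborel. x \<notin> F"
  by (intro AE_not_in finite_imp_null_set_lborel)

lemma piecewise_affine_onI:
  assumes "finite B" "finite F"
    and "\<forall>(a, b, m, q)\<in>B. m \<noteq> 0 \<and> (\<forall>x\<in>{a<..<b}. t x = m * x + q)"
    and "\<And>x. x \<notin> F \<Longrightarrow> (\<Sum>(a, b, m, q)\<in>B. indicator {a<..<b} x) = (indicator S x :: real)"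
  shows "piecewise_affine_on B S t"
  using assms AE_lborel_not_in_finite[OF \<open>finite F\<close>]
  unfolding piecewise_affine_on_def by (auto elim!: eventually_mono)

text \<open>The second equation covers negative slopes: simp normalises (y - q) / - m to - ((y - q) / m).\<close>

lemma indicator_affine_preimage:
  fixes a b m q y :: real
  shows "0 < m \<Longrightarrow> indicator {a<..<b} ((y - q) / m) = (indicator {m * a + q<..<m * b + q} y :: real)"
    and "0 < m \<Longrightarrow> indicator {a<..<b} (- ((y - q) / m)) = (indicator {q - m * b<..<q - m * a} y :: real)"
  by (auto simp: indicator_def field_simps)

lemma (in sigma_finite_measure) AE_eq_on_if_set_nn_integrals_eq:
  assumes [measurable]: "f \<in> borel_measurable M" "g \<in> borel_measurable M" "U \<in> sets M"
    and eq: "\<And>A. A \<in> sets M \<Longrightarrow> A \<subseteq> U \<Longrightarrow> (\<integral>\<^sup>+x\<in>A. f x \<partial>M) = (\<integral>\<^sup>+x\<in>A. g x \<partial>M)"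
  shows "AE x in M. x \<in> U \<longrightarrow> f x = g x"
proof -
  have "AE x in M. f x * indicator U x = g x * indicator U x"
  proof (rule density_unique2)
    fix A assume [measurable]: "A \<in> sets M"
    have "(\<integral>\<^sup>+x\<in>A. f x * indicator U x \<partial>M) = (\<integral>\<^sup>+x\<in>A \<inter> U. f x \<partial>M)"
      by (auto intro!: nn_integral_cong simp: indicator_def)
    also have "\<dots> = (\<integral>\<^sup>+x\<in>A \<inter> U. g x \<partial>M)"
      by (rule eq) auto
    also have "\<dots> = (\<integral>\<^sup>+x\<in>A. g x * indicator U x \<partial>M)"
      by (auto intro!: nn_integral_cong simp: indicator_def)
    finally show "(\<integral>\<^sup>+x\<in>A. f x * indicator U x \<partial>M) = (\<integral>\<^sup>+x\<in>A. g x * indicator U x \<partial>M)" .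
  qed auto
  then show ?thesis
    by (auto elim!: eventually_mono simp: indicator_def)
qed

lemma nn_integral_preimage_selection:
  fixes t\<^sub>1 t\<^sub>2 \<eta> :: "real \<Rightarrow> real"
  assumes [measurable]: "t\<^sub>1 \<in> borel_measurable borel" "t\<^sub>2 \<in> borel_measurable borel"
    "T \<in> sets borel" "S \<in> sets borel" "A \<in> sets borel"
    and select: "\<And>x. x \<in> S \<Longrightarrow> \<eta> x = (if x \<in> T then t\<^sub>2 x else t\<^sub>1 x)"
  shows "(\<integral>\<^sup>+x\<in>\<eta> -` A \<inter> S. 1 \<partial>lborel)
       = (\<integral>\<^sup>+x\<in>t\<^sub>2 -` A \<inter> S. ennreal (indicator T x) \<partial>lborel)
       + (\<integral>\<^sup>+x\<in>t\<^sub>1 -` A \<inter> S. ennreal (1 - indicator T x) \<partial>lborel)"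
  by (subst nn_integral_add[symmetric]) (auto intro!: nn_integral_cong simp: indicator_def select)

definition tau1_branches :: "(real \<times> real \<times> real \<times> real) set" where
  "tau1_branches = {(0, 3/8, 4/3, 0), (3/8, 1/2, 4, -1), (1/2, 5/8, -4, 3), (5/8, 1, -4/3, 4/3)}"

definition tau2_branches :: "(real \<times> real \<times> real \<times> real) set" where
  "tau2_branches = {(0, 1/6, 3, 0), (1/6, 1/2, 3/2, 1/4), (1/2, 5/6, -3/2, 7/4), (5/6, 1, -3, 3)}"

definition tau_branches :: "(real \<times> real \<times> real \<times> real) set" where
  "tau_branches = {(0, 1/6, 3, 0), (1/6, 1/2, 3/2, 1/4), (1/2, 2/3, -3, 5/2), (2/3, 1, -3/2, 3/2)}"

lemma piecewise_affine_tau1: "piecewise_affine_on tau1_branches {0..1} tau1"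
  by (rule piecewise_affine_onI[where F = "{0, 3/8, 1/2, 5/8, 1}"])
    (auto simp: tau1_branches_def tau1_def indicator_def)

lemma piecewise_affine_tau2: "piecewise_affine_on tau2_branches {0..1} tau2"
  by (rule piecewise_affine_onI[where F = "{0, 1/6, 1/2, 5/6, 1}"])
    (auto simp: tau2_branches_def tau2_def indicator_def)

lemma piecewise_affine_tau: "piecewise_affine_on tau_branches {0..1} tau"
  by (rule piecewise_affine_onI[where F = "{0, 1/6, 1/2, 2/3, 1}"])
    (auto simp: tau_branches_def tau_def tau2_def indicator_def)

lemma frobenius_perron_tau1_f1: "AE y in lborel. y \<in> {0..1} \<longrightarrow> frobenius_perron tau1_branches f1 y = f1 y"
  by (rule eventually_mono[OF AE_lborel_not_in_finite[of "{0, 1/2, 1}"]])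
    (auto simp: frobenius_perron_def tau1_branches_def f1_def indicator_def field_simps)

lemma frobenius_perron_tau2_f2: "AE y in lborel. y \<in> {0..1} \<longrightarrow> frobenius_perron tau2_branches f2 y = f2 y"
  by (rule eventually_mono[OF AE_lborel_not_in_finite[of "{0, 1/2, 1}"]])
    (auto simp: frobenius_perron_def tau2_branches_def f2_def indicator_def field_simps)

lemma frobenius_perron_tau_lebesgue:
  "AE y in lborel. y \<in> {0..1} \<longrightarrow> frobenius_perron tau_branches (\<lambda>_. 1) y = 1"
  by (rule eventually_mono[OF AE_lborel_not_in_finite[of "{0, 1/2, 1}"]])
    (auto simp: frobenius_perron_def tau_branches_def indicator_def field_simps)

lemma preserves_density_tau1: "preserves_density tau1 f1"
proof (rule preserves_density_piecewise_affine[OF piecewise_affine_tau1 _ _ frobenius_perron_tau1_f1])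
  show "f1 \<in> borel_measurable borel" unfolding f1_def by measurable
qed (simp add: f1_def indicator_def)

lemma preserves_density_tau2: "preserves_density tau2 f2"
proof (rule preserves_density_piecewise_affine[OF piecewise_affine_tau2 _ _ frobenius_perron_tau2_f2])
  show "f2 \<in> borel_measurable borel" unfolding f2_def by measurable
qed (simp add: f2_def indicator_def)

lemma preserves_lebesgue_tau: "preserves_density tau (\<lambda>_. 1)"
  by (rule preserves_density_piecewise_affine[OF piecewise_affine_tau _ _ frobenius_perron_tau_lebesgue])
    auto

lemma borel_measurable_tau1 [measurable]: "tau1 \<in> borel_measurable borel"
  unfolding tau1_def by measurable

lemma borel_measurable_tau2 [measurable]: "tau2 \<in> borel_measurable borel"
  unfolding tau2_def by measurable

lemma nn_integral_preimage_tau_selection: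
  assumes [measurable]: "T \<in> sets borel" "A \<in> sets borel"
    and select: "\<And>x. x \<in> {0..1} \<Longrightarrow> \<eta> x = (if x \<in> T then tau2 x else tau1 x)"
  shows "(\<integral>\<^sup>+x\<in>\<eta> -` A \<inter> {0..1}. 1 \<partial>lborel)
       = (\<integral>\<^sup>+y\<in>A. ennreal (frobenius_perron tau2_branches (indicator T) y
           + frobenius_perron tau1_branches (\<lambda>x. 1 - indicator T x) y) \<partial>lborel)"
proof -
  let ?s = "indicator T :: real \<Rightarrow> real"
  have s_meas: "?s \<in> borel_measurable borel" "(\<lambda>x. 1 - ?s x) \<in> borel_measurable borel"
    by simp_all
  have s_nonneg: "0 \<le> ?s x" "0 \<le> 1 - ?s x" for x
    by (simp_all add: indicator_def)
  have "(\<integral>\<^sup>+x\<in>\<eta> -` A \<inter> {0..1}. 1 \<partial>lborel)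
      = (\<integral>\<^sup>+x\<in>tau2 -` A \<inter> {0..1}. ennreal (?s x) \<partial>lborel)
      + (\<integral>\<^sup>+x\<in>tau1 -` A \<inter> {0..1}. ennreal (1 - ?s x) \<partial>lborel)"
    by (rule nn_integral_preimage_selection[OF _ _ _ _ _ select]) auto
  also have "\<dots> = (\<integral>\<^sup>+y\<in>A. ennreal (frobenius_perron tau2_branches ?s y) \<partial>lborel)
      + (\<integral>\<^sup>+y\<in>A. ennreal (frobenius_perron tau1_branches (\<lambda>x. 1 - ?s x) y) \<partial>lborel)"
    using nn_integral_preimage_piecewise_affine[OF piecewise_affine_tau2 s_meas(1) _ s_nonneg(1)]
      nn_integral_preimage_piecewise_affine[OF piecewise_affine_tau1 s_meas(2) _ s_nonneg(2)]
    by simp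
  also have "\<dots> = (\<integral>\<^sup>+y\<in>A. ennreal (frobenius_perron tau2_branches ?s y)
      + ennreal (frobenius_perron tau1_branches (\<lambda>x. 1 - ?s x) y) \<partial>lborel)"
    using s_meas by (simp add: distrib_right nn_integral_add)
  finally show ?thesis
    by (simp add: frobenius_perron_nonneg s_nonneg)
qed

lemma frobenius_perron_selection_ne_1:
  assumes s: "\<And>x. s x \<in> {0, 1}" and y: "1/2 < y" "y < 1"
  shows "frobenius_perron tau2_branches s y + frobenius_perron tau1_branches (\<lambda>x. 1 - s x) y \<noteq> 1"
proof -
  have "frobenius_perron tau2_branches s y + frobenius_perron tau1_branches (\<lambda>x. 1 - s x) y
      = 2/3 * (s ((y - 1/4) / (3/2)) + s ((y - 7/4) / (-3/2)))
      + 1/4 * ((1 - s ((y - -1) / 4)) + (1 - s ((y - 3) / -4)))"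
    using y
    by (simp add: frobenius_perron_def tau1_branches_def tau2_branches_def indicator_affine_preimage;
        simp add: field_simps)
  then show ?thesis
    using s[of "(y - 1/4) / (3/2)"] s[of "(y - 7/4) / (-3/2)"] s[of "(y - -1) / 4"] s[of "(y - 3) / -4"]
    by auto
qed

lemma no_selection_preserves_lebesgue:
  assumes \<eta>_meas: "\<eta> \<in> borel_measurable (restrict_space borel {0..1})"
    and select: "\<forall>x\<in>{0..1}. \<eta> x \<in> {tau1 x, tau2 x}"
  shows "\<not> preserves_density \<eta> (\<lambda>_. 1)"
proof
  assume preserves: "preserves_density \<eta> (\<lambda>_. 1)"
  define T where "T = {x\<in>{0..1}. \<eta> x = tau2 x}"
  have "{x \<in> space (restrict_space borel {0..1}). \<eta> x = tau2 x} \<in> sets (restrict_space borel {0..1})"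
    by (rule measurable_equality_set[OF \<eta>_meas measurable_restrict_space1]) measurable
  then have T_meas [measurable]: "T \<in> sets borel"
    by (simp add: T_def sets_restrict_space_iff space_restrict_space)
  have select_T: "\<And>x. x \<in> {0..1} \<Longrightarrow> \<eta> x = (if x \<in> T then tau2 x else tau1 x)"
    using select by (auto simp: T_def)
  define P where "P y = frobenius_perron tau2_branches (indicator T) y
    + frobenius_perron tau1_branches (\<lambda>x. 1 - indicator T x) y" for y
  have "(\<integral>\<^sup>+y\<in>A. ennreal (P y) \<partial>lborel) = (\<integral>\<^sup>+y\<in>A. 1 \<partial>lborel)"
    if [measurable]: "A \<in> sets borel" and "A \<subseteq> {1/2<..<1}" for A
  proof -
    have "A \<subseteq> {0..1}"
      using \<open>A \<subseteq> {1/2<..<1}\<close> by auto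
    then have "(\<integral>\<^sup>+y\<in>A. 1 \<partial>lborel) = (\<integral>\<^sup>+x\<in>\<eta> -` A \<inter> {0..1}. 1 \<partial>lborel)"
      using preserves[unfolded preserves_density_def, rule_format, OF \<open>A \<in> sets borel\<close>] by simp
    also have "\<dots> = (\<integral>\<^sup>+y\<in>A. ennreal (P y) \<partial>lborel)"
      unfolding P_def by (rule nn_integral_preimage_tau_selection[OF T_meas \<open>A \<in> sets borel\<close> select_T])
    finally show ?thesis ..
  qed
  then have "AE y in lborel. y \<in> {1/2<..<1::real} \<longrightarrow> ennreal (P y) = 1"
    by (intro lborel.AE_eq_on_if_set_nn_integrals_eq) (auto simp: P_def)
  moreover have "P y \<noteq> 1" if "1/2 < y" "y < 1" for y
    unfolding P_def using that by (intro frobenius_perron_selection_ne_1) (auto simp: indicator_def)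
  ultimately have "AE y in lborel. y \<notin> {1/2<..<1::real}"
    by (auto elim!: eventually_mono)
  then have "{1/2<..<1::real} \<in> null_sets lborel"
    by (subst AE_iff_null_sets) auto
  then show False
    by (simp add: null_sets_def)
qed

theorem mainTheorem5:
  shows "preserves_density tau1 f1
       \<and> preserves_density tau2 f2
       \<and> (AE x in lborel. x \<in> {0..1} \<longrightarrow> 2/5 * f1 x + 3/5 * f2 x = 1)
       \<and> \<not> (\<exists>\<eta>. \<eta> \<in> borel_measurable (restrict_space borel {0..1})
               \<and> (\<forall>x \<in> {0..1}. \<eta> x \<in> {tau1 x, tau2 x})
               \<and> preserves_density \<eta> (\<lambda>_. 1))
       \<and> (\<forall>x \<in> {0..1}. tau1 x \<le> tau x \<and> tau x \<le> tau2 x)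
       \<and> preserves_density tau (\<lambda>_. 1)"
proof -
  have "AE x in lborel. x \<in> {0..1} \<longrightarrow> 2/5 * f1 x + 3/5 * f2 x = 1"
    using AE_lborel_singleton[of "1/2::real"]
    by eventually_elim (auto simp: f1_def f2_def indicator_def)
  moreover have "\<forall>x\<in>{0..1}. tau1 x \<le> tau x \<and> tau x \<le> tau2 x"
    by (auto simp: tau1_def tau_def tau2_def)
  ultimately show ?thesis
    using preserves_density_tau1 preserves_density_tau2 preserves_lebesgue_tau
      no_selection_preserves_lebesgue by blast
qed

end
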